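(* Let $0<d<1/2$, let $\{x_t\}$ satisfy Assumption 1 (see context), and let $r_t=\sum_{j=0}^{t-1}\pi_j(d)$ for $t\ge1$. Then, as $T\to\infty$, $$\frac{\operatorname{Var}\left(\sum_{t=1}^T r_t x_t\right)}{\sum_{t=1}^T r_t^2}\;\longrightarrow\;\gamma_x(0)+2\sum_{h=1}^\infty\gamma_x(h)=\omega_x^2 .$$
   Context: For real $\delta$, the coefficients $\pi_j(\delta)$, $j\ge 0$, are defined by the binomial expansion $(1-z)^{\delta}=\sum_{j=0}^\infty \pi_j(\delta)z^j$, i.e. $\pi_0(\delta)=1$ and $\pi_j(\delta)=\prod_{k=1}^{j}\frac{k-1-\delta}{k}$. Assumption 1: $\{x_t\}$ is a covariance-stationary process $x_t=\sum_{j=0}^\infty c_j\varepsilon_{t-j}$ with $c_0=1$, $\sum_{j=0}^\infty|c_j|<\infty$, $c(1):=\sum_{j=0}^\infty c_j\neq 0$, where $\{\varepsilon_t\}$ is white noise with $E(\varepsilon_t)=0$, $E(\varepsilon_t^2)=\sigma^2>0$ and $E(\varepsilon_t\varepsilon_{t+h})=0$ for $h\ne0$. Its autocovariances are $\gamma_x(h)=E(x_tx_{t+h})$ and its long-run variance is $\omega_x^2=\sigma^2\big(\sum_{j=0}^\infty c_j\big)^2=\sum_{h=-\infty}^\infty\gamma_x(h)$. *)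

theory Defs
  imports "HOL-Probability.Probability"
begin

text \<open>Coefficients of the binomial expansion (1 - z) powr delta.\<close>
definition frac_coef :: "real \<Rightarrow> nat \<Rightarrow> real" where
  "frac_coef \<delta> j = (\<Prod>k = 1..j. (real k - 1 - \<delta>) / real k)"

definition partial_coef :: "real \<Rightarrow> nat \<Rightarrow> real" where
  "partial_coef d t = (\<Sum>j<t. frac_coef d j)"

text \<open>Linear process x_t = sum_j c_j eps_(t-j), defined pointwise (it converges a.s.).\<close>
definition lin_proc :: "(nat \<Rightarrow> real) \<Rightarrow> (int \<Rightarrow> 'a \<Rightarrow> real) \<Rightarrow> int \<Rightarrow> 'a \<Rightarrow> real" where
  "lin_proc c \<epsilon> t \<omega> = (\<Sum>j. c j * \<epsilon> (t - int j) \<omega>)"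

text \<open>Expectation, variance and autocovariance (written out; the library's
  expectation/variance are abbreviations inside the prob_space locale).\<close>
definition expect :: "'a measure \<Rightarrow> ('a \<Rightarrow> real) \<Rightarrow> real" where
  "expect M X = integral\<^sup>L M X"

definition Var :: "'a measure \<Rightarrow> ('a \<Rightarrow> real) \<Rightarrow> real" where
  "Var M X = integral\<^sup>L M (\<lambda>\<omega>. (X \<omega> - integral\<^sup>L M X)\<^sup>2)"

text \<open>gamma_x(h) = E(x_t x_(t+h)); by covariance stationarity this does not depend on t,
  so we take t = 0.\<close>
definition autocov :: "'a measure \<Rightarrow> (int \<Rightarrow> 'a \<Rightarrow> real) \<Rightarrow> int \<Rightarrow> real" where
  "autocov M x h = expect M (\<lambda>\<omega>. x 0 \<omega> * x h \<omega>)"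

end

theory Submission
  imports Defs "HOL-Analysis.Harmonic_Numbers"
begin

text \<open>Write \<open>r\<^sub>s\<close> for the weights and \<open>\<gamma>(h) = \<sigma>\<^sup>2 \<Sum>\<^sub>i c\<^sub>i c\<^sub>i\<^sub>+\<^sub>h\<close> for the
  autocovariances of \<open>x\<close>. The variance of \<open>\<Sum> r\<^sub>t x\<^sub>t\<close> is the Toeplitz form
  \<open>\<Sum>\<^sub>s\<^sub>,\<^sub>t r\<^sub>s r\<^sub>t \<gamma>(|s - t|) = \<gamma>(0) D\<^sub>T + 2 \<Sum>\<^sub>h \<gamma>(h) A\<^sub>T(h)\<close>, where
  \<open>D\<^sub>T = \<Sum> r\<^sub>s\<^sup>2\<close> and \<open>A\<^sub>T(h) = \<Sum>\<^sub>s r\<^sub>s r\<^sub>s\<^sub>+\<^sub>h\<close>. The weights satisfy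
  \<open>r\<^sub>t\<^sub>+\<^sub>1 = r\<^sub>t (t - d) / t\<close>, so they are positive and nonincreasing, whence
  \<open>D\<^sub>T - h r\<^sub>1\<^sup>2 \<le> A\<^sub>T(h) \<le> D\<^sub>T\<close>; and for \<open>d < 1/2\<close> the sequence \<open>t r\<^sub>t\<^sup>2\<close> is eventually
  nondecreasing, so \<open>D\<^sub>T\<close> dominates a multiple of the harmonic series and diverges. Hence
  \<open>A\<^sub>T(h) / D\<^sub>T \<rightarrow> 1\<close> for every \<open>h\<close>, and Tannery's theorem, with the summable
  majorant \<open>|\<gamma>(h)|\<close>, gives the limit \<open>\<gamma>(0) + 2 \<Sum>\<^sub>h \<gamma>(h)\<close>. The same expansion of
  \<open>(\<Sum>\<^sub>s\<^sub><\<^sub>N c\<^sub>s)\<^sup>2\<close>, passed to the limit in the same way, identifies this with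
  \<open>\<sigma>\<^sup>2 c(1)\<^sup>2\<close>.\<close>

section \<open>Fractional weights\<close>

lemma frac_coef_Suc: "frac_coef d (Suc j) = frac_coef d j * ((real j - d) / real (Suc j))"
  unfolding frac_coef_def by (simp add: prod.cl_ivl_Suc)

lemma frac_coef_eq_partial_coef: "real t * frac_coef d t = - d * partial_coef d t"
proof (induction t)
  case 0
  show ?case by (simp add: partial_coef_def)
next
  case (Suc t)
  have "real (Suc t) * frac_coef d (Suc t) = (real t - d) * frac_coef d t"
    by (simp add: frac_coef_Suc)
  also have "\<dots> = - d * partial_coef d (Suc t)"
    using Suc.IH by (simp add: partial_coef_def algebra_simps)
  finally show ?case .
qed

lemma partial_coef_Suc_0 [simp]: "partial_coef d (Suc 0) = 1"
  by (simp add: partial_coef_def frac_coef_def)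

lemma partial_coef_Suc:
  assumes "1 \<le> t"
  shows "partial_coef d (Suc t) = partial_coef d t * ((real t - d) / real t)"
proof -
  have "partial_coef d (Suc t) = partial_coef d t + frac_coef d t"
    by (simp add: partial_coef_def)
  also have "frac_coef d t = - d * partial_coef d t / real t"
    using frac_coef_eq_partial_coef[of t d] assms by (simp add: field_simps)
  finally show ?thesis
    using assms by (simp add: field_simps)
qed

lemma partial_coef_pos:
  assumes "d < 1" and "1 \<le> t"
  shows "0 < partial_coef d t"
  using assms(2)
proof (induction t rule: dec_induct)
  case (step t)
  then show ?case
    using assms(1) by (simp add: partial_coef_Suc)
qed simp

lemma decseq_partial_coef:
  assumes "0 \<le> d" and "d < 1"
  shows "decseq (\<lambda>s. partial_coef d (Suc s))"
proof (rule decseq_SucI)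
  fix s
  have "partial_coef d (Suc (Suc s)) = partial_coef d (Suc s) * ((real (Suc s) - d) / real (Suc s))"
    by (rule partial_coef_Suc) simp
  also have "\<dots> \<le> partial_coef d (Suc s)"
    using assms partial_coef_pos[of d "Suc s"] by (intro mult_left_le) auto
  finally show "partial_coef d (Suc (Suc s)) \<le> partial_coef d (Suc s)" .
qed

lemma partial_coef_sq_growth:
  assumes "0 < d" and "1 \<le> m" and "2 * d * (real m + 1) \<le> real m"
  shows "real m * (partial_coef d m)\<^sup>2 \<le> real (Suc m) * (partial_coef d (Suc m))\<^sup>2"
proof -
  have cubic: "real m ^ 3 \<le> (real m + 1) * (real m - d)\<^sup>2"
  proof -
    have "(real m + 1) * (real m - d)\<^sup>2 - real m ^ 3
        = real m * (real m - 2 * d * (real m + 1)) + (real m + 1) * d\<^sup>2"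
      by (simp add: power2_eq_square power3_eq_cube algebra_simps)
    also have "\<dots> \<ge> 0"
      using assms by (intro add_nonneg_nonneg mult_nonneg_nonneg) auto
    finally show ?thesis by simp
  qed
  have "real m * (partial_coef d m)\<^sup>2 = (partial_coef d m)\<^sup>2 * real m ^ 3 / (real m)\<^sup>2"
    using assms by (simp add: power2_eq_square power3_eq_cube)
  also have "\<dots> \<le> (partial_coef d m)\<^sup>2 * ((real m + 1) * (real m - d)\<^sup>2) / (real m)\<^sup>2"
    using cubic by (intro divide_right_mono mult_left_mono) auto
  also have "\<dots> = real (Suc m) * (partial_coef d (Suc m))\<^sup>2"
    using assms by (simp add: partial_coef_Suc power2_eq_square field_simps)
  finally show ?thesis .
qed

lemma sum_at_top_of_eventually_ge_inverse:
  fixes f :: "nat \<Rightarrow> real"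
  assumes "0 < C" and "\<And>t. 0 \<le> f t" and "\<And>t. K \<le> t \<Longrightarrow> C / real t \<le> f t"
  shows "filterlim (\<lambda>T. \<Sum>t = 1..T. f t) at_top sequentially"
proof -
  have harm_le: "C * harm T - C * harm K \<le> (\<Sum>t = 1..T. f t)" for T
  proof -
    have "C * harm T = (\<Sum>t = 1..T. C / real t)"
      by (simp add: harm_def sum_distrib_left divide_inverse)
    also have "\<dots> \<le> (\<Sum>t = 1..T. f t + (if t < K then C / real t else 0))"
      using assms by (intro sum_mono) (auto simp: add_increasing)
    also have "\<dots> = (\<Sum>t = 1..T. f t) + (\<Sum>t \<in> {1..T} \<inter> {..<K}. C / real t)"
      by (simp add: sum.distrib sum.If_cases Int_def)
    also have "(\<Sum>t \<in> {1..T} \<inter> {..<K}. C / real t) \<le> (\<Sum>t = 1..K. C / real t)"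
      using assms(1) by (intro sum_mono2) auto
    also have "\<dots> = C * harm K"
      by (simp add: harm_def sum_distrib_left divide_inverse)
    finally show ?thesis by simp
  qed
  have "filterlim (\<lambda>T. - (C * harm K) + C * harm T) at_top sequentially"
    using assms(1)
    by (intro filterlim_tendsto_add_at_top[OF tendsto_const]
        filterlim_tendsto_pos_mult_at_top[OF tendsto_const _ harm_at_top])
  then show ?thesis
    by (rule filterlim_at_top_mono) (use harm_le in auto)
qed

lemma sum_partial_coef_sq_at_top:
  assumes "0 < d" and "d < 1/2"
  shows "filterlim (\<lambda>T. \<Sum>t = 1..T. (partial_coef d t)\<^sup>2) at_top sequentially"
proof -
  define K :: nat where "K = max 1 (nat \<lceil>2 * d / (1 - 2 * d)\<rceil>)"
  have "1 \<le> K"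
    by (simp add: K_def)
  have K_growth: "2 * d * (real m + 1) \<le> real m" if "K \<le> m" for m
  proof -
    have "2 * d / (1 - 2 * d) \<le> real m"
      using that unfolding K_def by linarith
    then show ?thesis
      using assms by (simp add: field_simps)
  qed
  define C where "C = real K * (partial_coef d K)\<^sup>2"
  have "0 < C"
    unfolding C_def using partial_coef_pos[of d K] assms \<open>1 \<le> K\<close> by simp
  have "C \<le> real t * (partial_coef d t)\<^sup>2" if "K \<le> t" for t
    using that
  proof (induction t rule: dec_induct)
    case (step m)
    then show ?case
      using partial_coef_sq_growth[of d m] K_growth[of m] assms \<open>1 \<le> K\<close> by simp
  qed (simp add: C_def)
  then have C_div_le: "C / real t \<le> (partial_coef d t)\<^sup>2" if "K \<le> t" for t
    using that \<open>1 \<le> K\<close> by (simp add: divide_le_eq mult.commute)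
  show ?thesis
    using \<open>0 < C\<close> by (rule sum_at_top_of_eventually_ge_inverse[where K = K]) (simp_all add: C_div_le)
qed

section \<open>Toeplitz quadratic forms\<close>

definition lag_prod_sum :: "(nat \<Rightarrow> real) \<Rightarrow> nat \<Rightarrow> nat \<Rightarrow> real" where
  "lag_prod_sum a N k = (\<Sum>s<N - k. a s * a (s + k))"

lemma lag_prod_sum_eq_0: "N \<le> k \<Longrightarrow> lag_prod_sum a N k = 0"
  by (simp add: lag_prod_sum_def)

lemma lag_prod_sum_Suc_Suc:
  "lag_prod_sum a (Suc N) (Suc h) = lag_prod_sum a N (Suc h) + (if h < N then a (N - Suc h) * a N else 0)"
proof (cases "h < N")
  case True
  then have "N - h = Suc (N - Suc h)" by simp
  then show ?thesis
    using True by (simp add: lag_prod_sum_def)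
qed (simp add: lag_prod_sum_def)

lemma toeplitz_form_eq_lag_prod_sums:
  fixes a G :: "nat \<Rightarrow> real"
  shows "(\<Sum>s<N. \<Sum>t<N. a s * a t * G (if s \<le> t then t - s else s - t))
    = G 0 * (\<Sum>s<N. (a s)\<^sup>2) + 2 * (\<Sum>h<N. G (Suc h) * lag_prod_sum a N (Suc h))"
proof (induction N)
  case 0
  show ?case by simp
next
  case (Suc N)
  define E where "E = (\<Sum>s<N. a s * a N * G (N - s))"
  have new_terms: "(\<Sum>s<Suc N. \<Sum>t<Suc N. a s * a t * G (if s \<le> t then t - s else s - t))
     = (\<Sum>s<N. \<Sum>t<N. a s * a t * G (if s \<le> t then t - s else s - t)) + 2 * E + (a N)\<^sup>2 * G 0"
  proof -
    have "(\<Sum>s<N. a s * a N * G (if s \<le> N then N - s else s - N)) = E"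
      "(\<Sum>t<N. a N * a t * G (if N \<le> t then t - N else N - t)) = E"
      unfolding E_def by (auto intro!: sum.cong)
    then show ?thesis
      by (simp add: sum.distrib power2_eq_square)
  qed
  have "E = (\<Sum>h<N. a (N - Suc h) * a N * G (N - (N - Suc h)))"
    unfolding E_def by (rule sum.nat_diff_reindex[symmetric])
  also have "\<dots> = (\<Sum>h<N. G (Suc h) * (if h < N then a (N - Suc h) * a N else 0))"
    by (intro sum.cong) auto
  finally have E_eq: "E = (\<Sum>h<Suc N. G (Suc h) * (if h < N then a (N - Suc h) * a N else 0))"
    by simp
  have "(\<Sum>h<Suc N. G (Suc h) * lag_prod_sum a (Suc N) (Suc h))
      = (\<Sum>h<Suc N. G (Suc h) * lag_prod_sum a N (Suc h)) + E"
    unfolding E_eq by (simp only: lag_prod_sum_Suc_Suc distrib_left sum.distrib)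
  also have "(\<Sum>h<Suc N. G (Suc h) * lag_prod_sum a N (Suc h)) = (\<Sum>h<N. G (Suc h) * lag_prod_sum a N (Suc h))"
    by (simp add: lag_prod_sum_eq_0)
  finally have new_lags: "(\<Sum>h<Suc N. G (Suc h) * lag_prod_sum a (Suc N) (Suc h))
      = (\<Sum>h<N. G (Suc h) * lag_prod_sum a N (Suc h)) + E" .
  then show ?case
    unfolding new_terms new_lags Suc.IH by (simp add: algebra_simps)
qed

lemma lag_prod_sum_nonneg: "(\<And>s. 0 \<le> a s) \<Longrightarrow> 0 \<le> lag_prod_sum a N k"
  unfolding lag_prod_sum_def by (intro sum_nonneg mult_nonneg_nonneg)

lemma lag_prod_sum_le_sum_sq:
  assumes "decseq a" and "\<And>s. 0 \<le> a s"
  shows "lag_prod_sum a N k \<le> (\<Sum>s<N. (a s)\<^sup>2)"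
proof -
  have "lag_prod_sum a N k \<le> (\<Sum>s<N - k. (a s)\<^sup>2)"
    unfolding lag_prod_sum_def power2_eq_square
    using assms by (intro sum_mono mult_left_mono) (auto simp: decseq_def)
  also have "\<dots> \<le> (\<Sum>s<N. (a s)\<^sup>2)"
    by (intro sum_mono2) auto
  finally show ?thesis .
qed

lemma sum_sq_le_lag_prod_sum:
  assumes "decseq a" and "\<And>s. 0 \<le> a s"
  shows "(\<Sum>s<N. (a s)\<^sup>2) - real k * (a 0)\<^sup>2 \<le> lag_prod_sum a N k"
proof -
  have "(\<Sum>s<N. (a s)\<^sup>2) \<le> (\<Sum>s \<in> {..<k} \<union> {k..<N}. (a s)\<^sup>2)"
    by (intro sum_mono2) auto
  also have "\<dots> = (\<Sum>s<k. (a s)\<^sup>2) + (\<Sum>s \<in> {k..<N}. (a s)\<^sup>2)"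
    by (rule sum.union_disjoint) auto
  also have "{k..<N} = (\<lambda>s. s + k) ` {..<N - k}"
  proof (intro equalityI subsetI)
    fix s assume "s \<in> {k..<N}"
    then show "s \<in> (\<lambda>s. s + k) ` {..<N - k}"
      by (intro image_eqI[of _ _ "s - k"]) auto
  qed auto
  also have "(\<Sum>s \<in> (\<lambda>s. s + k) ` {..<N - k}. (a s)\<^sup>2) = (\<Sum>s<N - k. (a (s + k))\<^sup>2)"
    by (simp add: sum.reindex)
  also have "(\<Sum>s<k. (a s)\<^sup>2) \<le> real k * (a 0)\<^sup>2"
    using sum_mono[of "{..<k}" "\<lambda>s. (a s)\<^sup>2" "\<lambda>_. (a 0)\<^sup>2"] assms
    by (auto simp: decseq_def intro: power_mono)
  also have "(\<Sum>s<N - k. (a (s + k))\<^sup>2) \<le> lag_prod_sum a N k"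
    unfolding lag_prod_sum_def power2_eq_square
    using assms by (intro sum_mono mult_right_mono) (auto simp: decseq_def)
  finally show ?thesis by simp
qed

lemma lag_prod_sum_ratio_tendsto_1:
  assumes "decseq a" and "\<And>s. 0 \<le> a s"
    and "filterlim (\<lambda>N. \<Sum>s<N. (a s)\<^sup>2) at_top sequentially"
  shows "(\<lambda>N. lag_prod_sum a N k / (\<Sum>s<N. (a s)\<^sup>2)) \<longlonglongrightarrow> 1"
proof -
  define D where "D N = (\<Sum>s<N. (a s)\<^sup>2)" for N
  have D_pos: "eventually (\<lambda>N. 0 < D N) sequentially"
    using assms(3) unfolding D_def by (simp add: filterlim_at_top_dense)
  have "(\<lambda>N. lag_prod_sum a N k / D N) \<longlonglongrightarrow> 1"
  proof (rule tendsto_sandwich)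
    have "(\<lambda>N. inverse (D N)) \<longlonglongrightarrow> 0"
      using tendsto_inverse_0_at_top[OF assms(3)] by (simp add: D_def)
    from tendsto_diff[OF tendsto_const tendsto_mult[OF tendsto_const this]]
    show "(\<lambda>N. 1 - real k * (a 0)\<^sup>2 * inverse (D N)) \<longlonglongrightarrow> 1"
      by simp
    show "eventually (\<lambda>N. 1 - real k * (a 0)\<^sup>2 * inverse (D N) \<le> lag_prod_sum a N k / D N) sequentially"
      using D_pos
    proof eventually_elim
      case (elim N)
      have "1 - real k * (a 0)\<^sup>2 * inverse (D N) = (D N - real k * (a 0)\<^sup>2) / D N"
        using elim by (simp add: field_simps)
      also have "\<dots> \<le> lag_prod_sum a N k / D N"
        using elim sum_sq_le_lag_prod_sum[OF assms(1,2), of N k]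
        by (intro divide_right_mono) (auto simp: D_def)
      finally show ?case .
    qed
    show "eventually (\<lambda>N. lag_prod_sum a N k / D N \<le> 1) sequentially"
      using D_pos
    proof eventually_elim
      case (elim N)
      then show ?case
        using lag_prod_sum_le_sum_sq[OF assms(1,2), of N k] by (simp add: D_def)
    qed
  qed simp
  then show ?thesis
    by (simp add: D_def)
qed

lemma toeplitz_form_ratio_tendsto:
  fixes a G :: "nat \<Rightarrow> real"
  assumes a: "decseq a" "\<And>s. 0 \<le> a s"
    and D: "filterlim (\<lambda>N. \<Sum>s<N. (a s)\<^sup>2) at_top sequentially"
    and G: "summable (\<lambda>h. \<bar>G (Suc h)\<bar>)"
  shows "(\<lambda>N. (\<Sum>s<N. \<Sum>t<N. a s * a t * G (if s \<le> t then t - s else s - t)) / (\<Sum>s<N. (a s)\<^sup>2))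
     \<longlonglongrightarrow> G 0 + 2 * (\<Sum>h. G (Suc h))"
proof -
  define q where "q N h = lag_prod_sum a N (Suc h) / (\<Sum>s<N. (a s)\<^sup>2)" for N h
  have q_bound: "\<bar>q N h\<bar> \<le> 1" for N h
    using lag_prod_sum_le_sum_sq[OF a, where N = N and k = "Suc h"] lag_prod_sum_nonneg[OF a(2), where N = N and k = "Suc h"]
    by (auto simp: q_def divide_le_eq_1)
  have "eventually (\<lambda>N. summable (\<lambda>h. norm (G (Suc h) * q N h))) sequentially \<and>
      summable (\<lambda>h. norm (G (Suc h) * 1)) \<and>
      (\<lambda>N. \<Sum>h. G (Suc h) * q N h) \<longlonglongrightarrow> (\<Sum>h. G (Suc h) * 1)"
  proof (rule tannerys_theorem[where M = "\<lambda>h. \<bar>G (Suc h)\<bar>"])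
    show "(\<lambda>N. G (Suc h) * q N h) \<longlonglongrightarrow> G (Suc h) * 1" for h
      unfolding q_def by (intro tendsto_mult tendsto_const lag_prod_sum_ratio_tendsto_1 a D)
    show "\<forall>\<^sub>F (h, N) in at_top \<times>\<^sub>F sequentially. norm (G (Suc h) * q N h) \<le> \<bar>G (Suc h)\<bar>"
      using q_bound by (intro always_eventually) (auto simp: abs_mult intro: mult_left_le)
  qed (use G in auto)
  then have "(\<lambda>N. G 0 + 2 * (\<Sum>h. G (Suc h) * q N h)) \<longlonglongrightarrow> G 0 + 2 * (\<Sum>h. G (Suc h))"
    by (auto intro!: tendsto_intros)
  moreover have "(\<Sum>s<N. \<Sum>t<N. a s * a t * G (if s \<le> t then t - s else s - t)) / (\<Sum>s<N. (a s)\<^sup>2)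
      = G 0 + 2 * (\<Sum>h. G (Suc h) * q N h)" if "0 < (\<Sum>s<N. (a s)\<^sup>2)" for N
  proof -
    have "(\<Sum>h. G (Suc h) * q N h) = (\<Sum>h<N. G (Suc h) * q N h)"
      by (rule suminf_finite) (auto simp: q_def lag_prod_sum_eq_0)
    also have "\<dots> = (\<Sum>h<N. G (Suc h) * lag_prod_sum a N (Suc h)) / (\<Sum>s<N. (a s)\<^sup>2)"
      by (simp add: q_def sum_divide_distrib)
    finally show ?thesis
      using that unfolding toeplitz_form_eq_lag_prod_sums by (simp add: field_simps)
  qed
  moreover have "eventually (\<lambda>N. 0 < (\<Sum>s<N. (a s)\<^sup>2)) sequentially"
    using D by (simp add: filterlim_at_top_dense)
  ultimately show ?thesis
    by (simp add: Lim_transform_eventually eventually_mono)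
qed

section \<open>Autocovariances of a coefficient sequence\<close>

definition coef_autocov :: "(nat \<Rightarrow> real) \<Rightarrow> nat \<Rightarrow> real" where
  "coef_autocov c h = (\<Sum>i. c i * c (i + h))"

lemma summable_abs_mult_shift:
  fixes c :: "nat \<Rightarrow> real"
  assumes "summable (\<lambda>j. \<bar>c j\<bar>)"
  shows "summable (\<lambda>i. \<bar>c i\<bar> * \<bar>c (i + h)\<bar>)"
proof (rule summable_comparison_test'[OF summable_mult2[OF assms, of "\<Sum>j. \<bar>c j\<bar>"]])
  fix i
  have "\<bar>c (i + h)\<bar> \<le> (\<Sum>j. \<bar>c j\<bar>)"
    using sum_le_suminf[OF assms, of "{i + h}"] by simp
  then show "norm (\<bar>c i\<bar> * \<bar>c (i + h)\<bar>) \<le> \<bar>c i\<bar> * (\<Sum>j. \<bar>c j\<bar>)"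
    by (simp add: abs_mult mult_left_mono)
qed

lemma summable_mult_shift:
  fixes c :: "nat \<Rightarrow> real"
  assumes "summable (\<lambda>j. \<bar>c j\<bar>)"
  shows "summable (\<lambda>i. c i * c (i + h))"
  by (rule summable_comparison_test'[OF summable_abs_mult_shift[OF assms, of h]]) (simp add: abs_mult)

lemma abs_coef_autocov_le:
  fixes c :: "nat \<Rightarrow> real"
  assumes "summable (\<lambda>j. \<bar>c j\<bar>)"
  shows "\<bar>coef_autocov c h\<bar> \<le> coef_autocov (\<lambda>j. \<bar>c j\<bar>) h"
  unfolding coef_autocov_def
  using summable_rabs[of "\<lambda>i. c i * c (i + h)"] summable_abs_mult_shift[OF assms, of h]
  by (simp add: abs_mult)

lemma abs_lag_prod_sum_le:
  fixes c :: "nat \<Rightarrow> real"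
  assumes "summable (\<lambda>j. \<bar>c j\<bar>)"
  shows "\<bar>lag_prod_sum c N h\<bar> \<le> coef_autocov (\<lambda>j. \<bar>c j\<bar>) h"
proof -
  have "\<bar>lag_prod_sum c N h\<bar> \<le> (\<Sum>i<N - h. \<bar>c i\<bar> * \<bar>c (i + h)\<bar>)"
    unfolding lag_prod_sum_def abs_mult[symmetric] by (rule sum_abs)
  also have "\<dots> \<le> coef_autocov (\<lambda>j. \<bar>c j\<bar>) h"
    unfolding coef_autocov_def by (intro sum_le_suminf summable_abs_mult_shift[OF assms]) auto
  finally show ?thesis .
qed

lemma lag_prod_sum_tendsto_coef_autocov:
  fixes c :: "nat \<Rightarrow> real"
  assumes "summable (\<lambda>j. \<bar>c j\<bar>)"
  shows "(\<lambda>N. lag_prod_sum c N h) \<longlonglongrightarrow> coef_autocov c h"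
proof (rule LIMSEQ_offset[where k = h])
  show "(\<lambda>N. lag_prod_sum c (N + h) h) \<longlonglongrightarrow> coef_autocov c h"
    unfolding lag_prod_sum_def coef_autocov_def
    using summable_LIMSEQ[OF summable_mult_shift[OF assms, of h]] by simp
qed

lemma summable_coef_autocov_abs:
  fixes c :: "nat \<Rightarrow> real"
  assumes c: "summable (\<lambda>j. \<bar>c j\<bar>)"
  shows "summable (coef_autocov (\<lambda>j. \<bar>c j\<bar>))"
proof (rule summableI_nonneg_bounded[where x = "(\<Sum>j. \<bar>c j\<bar>) * (\<Sum>j. \<bar>c j\<bar>)"])
  show "0 \<le> coef_autocov (\<lambda>j. \<bar>c j\<bar>) h" for h
    unfolding coef_autocov_def by (intro suminf_nonneg summable_abs_mult_shift[OF c]) auto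
  fix H
  have "(\<Sum>h<H. coef_autocov (\<lambda>j. \<bar>c j\<bar>) h) = (\<Sum>i. \<Sum>h<H. \<bar>c i\<bar> * \<bar>c (i + h)\<bar>)"
    unfolding coef_autocov_def by (rule suminf_sum[symmetric]) (rule summable_abs_mult_shift[OF c])
  also have "\<dots> \<le> (\<Sum>i. \<bar>c i\<bar> * (\<Sum>j. \<bar>c j\<bar>))"
  proof (rule suminf_le)
    fix i
    have "(\<Sum>h<H. \<bar>c (i + h)\<bar>) = (\<Sum>j \<in> (\<lambda>h. i + h) ` {..<H}. \<bar>c j\<bar>)"
      by (simp add: sum.reindex inj_on_def)
    also have "\<dots> \<le> (\<Sum>j. \<bar>c j\<bar>)"
      by (rule sum_le_suminf[OF c]) auto
    finally show "(\<Sum>h<H. \<bar>c i\<bar> * \<bar>c (i + h)\<bar>) \<le> \<bar>c i\<bar> * (\<Sum>j. \<bar>c j\<bar>)"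
      by (simp add: sum_distrib_left[symmetric] mult_left_mono)
  next
    show "summable (\<lambda>i. \<Sum>h<H. \<bar>c i\<bar> * \<bar>c (i + h)\<bar>)"
      by (intro summable_sum summable_abs_mult_shift[OF c])
    show "summable (\<lambda>i. \<bar>c i\<bar> * (\<Sum>j. \<bar>c j\<bar>))"
      by (rule summable_mult2[OF c])
  qed
  also have "\<dots> = (\<Sum>j. \<bar>c j\<bar>) * (\<Sum>j. \<bar>c j\<bar>)"
    by (rule suminf_mult2[OF c, symmetric])
  finally show "(\<Sum>h<H. coef_autocov (\<lambda>j. \<bar>c j\<bar>) h) \<le> (\<Sum>j. \<bar>c j\<bar>) * (\<Sum>j. \<bar>c j\<bar>)" .
qed

lemma summable_coef_autocov:
  fixes c :: "nat \<Rightarrow> real"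
  assumes "summable (\<lambda>j. \<bar>c j\<bar>)"
  shows "summable (\<lambda>h. \<bar>coef_autocov c h\<bar>)"
  by (rule summable_comparison_test'[OF summable_coef_autocov_abs[OF assms]])
    (simp add: abs_coef_autocov_le[OF assms])

lemma coef_autocov_sum_eq_sq_suminf:
  fixes c :: "nat \<Rightarrow> real"
  assumes c: "summable (\<lambda>j. \<bar>c j\<bar>)"
  shows "coef_autocov c 0 + 2 * (\<Sum>h. coef_autocov c (Suc h)) = (suminf c)\<^sup>2"
proof -
  have partial_sq: "(\<Sum>s<N. c s)\<^sup>2 = lag_prod_sum c N 0 + 2 * (\<Sum>h. lag_prod_sum c N (Suc h))" for N
  proof -
    have "(\<Sum>s<N. c s)\<^sup>2 = (\<Sum>s<N. \<Sum>t<N. c s * c t * (\<lambda>_. 1) (if s \<le> t then t - s else s - t))"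
      by (simp add: power2_eq_square sum_product)
    also have "\<dots> = lag_prod_sum c N 0 + 2 * (\<Sum>h<N. lag_prod_sum c N (Suc h))"
      by (subst toeplitz_form_eq_lag_prod_sums) (simp add: lag_prod_sum_def power2_eq_square)
    also have "(\<Sum>h<N. lag_prod_sum c N (Suc h)) = (\<Sum>h. lag_prod_sum c N (Suc h))"
      by (rule suminf_finite[symmetric]) (auto simp: lag_prod_sum_eq_0)
    finally show ?thesis .
  qed
  have "eventually (\<lambda>N. summable (\<lambda>h. norm (lag_prod_sum c N (Suc h)))) sequentially \<and>
      summable (\<lambda>h. norm (coef_autocov c (Suc h))) \<and>
      (\<lambda>N. \<Sum>h. lag_prod_sum c N (Suc h)) \<longlonglongrightarrow> (\<Sum>h. coef_autocov c (Suc h))"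
  proof (rule tannerys_theorem[where M = "\<lambda>h. coef_autocov (\<lambda>j. \<bar>c j\<bar>) (Suc h)"])
    show "(\<lambda>N. lag_prod_sum c N (Suc h)) \<longlonglongrightarrow> coef_autocov c (Suc h)" for h
      by (rule lag_prod_sum_tendsto_coef_autocov[OF c])
    show "\<forall>\<^sub>F (h, N) in at_top \<times>\<^sub>F sequentially. norm (lag_prod_sum c N (Suc h)) \<le> coef_autocov (\<lambda>j. \<bar>c j\<bar>) (Suc h)"
      using abs_lag_prod_sum_le[OF c] by (intro always_eventually) auto
    show "summable (\<lambda>h. coef_autocov (\<lambda>j. \<bar>c j\<bar>) (Suc h))"
      using summable_coef_autocov_abs[OF c] by (simp add: summable_Suc_iff)
  qed auto
  then have "(\<lambda>N. (\<Sum>s<N. c s)\<^sup>2) \<longlonglongrightarrow> coef_autocov c 0 + 2 * (\<Sum>h. coef_autocov c (Suc h))"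
    unfolding partial_sq using lag_prod_sum_tendsto_coef_autocov[OF c, of 0]
    by (auto intro!: tendsto_intros)
  moreover have "(\<lambda>N. (\<Sum>s<N. c s)\<^sup>2) \<longlonglongrightarrow> (suminf c)\<^sup>2"
    by (intro tendsto_power summable_LIMSEQ summable_rabs_cancel[OF c])
  ultimately show ?thesis
    by (rule LIMSEQ_unique)
qed

section \<open>Linear processes driven by white noise\<close>

lemma abs_mult_le_half_sum_sq: "\<bar>x * y\<bar> \<le> (x\<^sup>2 + y\<^sup>2) / (2::real)"
  using sum_squares_bound[of "\<bar>x\<bar>" "\<bar>y\<bar>"] by (simp add: abs_mult)

locale linear_process = prob_space M for M :: "'a measure" +
  fixes \<epsilon> :: "int \<Rightarrow> 'a \<Rightarrow> real" and \<sigma>2 :: real and c :: "nat \<Rightarrow> real"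
  assumes eps_measurable [measurable]: "\<And>t. \<epsilon> t \<in> borel_measurable M"
    and integrable_eps_sq: "\<And>t. integrable M (\<lambda>\<omega>. (\<epsilon> t \<omega>)\<^sup>2)"
    and expectation_eps: "\<And>t. expectation (\<epsilon> t) = 0"
    and expectation_eps_sq: "\<And>t. expectation (\<lambda>\<omega>. (\<epsilon> t \<omega>)\<^sup>2) = \<sigma>2"
    and expectation_eps_mult_neq: "\<And>s t. s \<noteq> t \<Longrightarrow> expectation (\<lambda>\<omega>. \<epsilon> s \<omega> * \<epsilon> t \<omega>) = 0"
    and summable_abs_coef: "summable (\<lambda>j. \<bar>c j\<bar>)"
begin

lemma integrable_eps: "integrable M (\<epsilon> t)"
  by (rule square_integrable_imp_integrable) (auto intro: integrable_eps_sq)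

lemma integrable_eps_mult: "integrable M (\<lambda>\<omega>. \<epsilon> s \<omega> * \<epsilon> t \<omega>)"
proof (rule Bochner_Integration.integrable_bound)
  show "integrable M (\<lambda>\<omega>. ((\<epsilon> s \<omega>)\<^sup>2 + (\<epsilon> t \<omega>)\<^sup>2) / 2)"
    by (intro integrable_divide Bochner_Integration.integrable_add integrable_eps_sq)
  show "AE \<omega> in M. norm (\<epsilon> s \<omega> * \<epsilon> t \<omega>) \<le> norm (((\<epsilon> s \<omega>)\<^sup>2 + (\<epsilon> t \<omega>)\<^sup>2) / 2)"
    using abs_mult_le_half_sum_sq by (intro AE_I2) simp
qed simp

lemma expectation_eps_mult: "expectation (\<lambda>\<omega>. \<epsilon> s \<omega> * \<epsilon> t \<omega>) = (if s = t then \<sigma>2 else 0)"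
  using expectation_eps_mult_neq[of s t] expectation_eps_sq[of s] by (auto simp: power2_eq_square)

lemma sigma2_nonneg: "0 \<le> \<sigma>2"
  using integral_nonneg_AE[of "\<lambda>\<omega>. (\<epsilon> 0 \<omega>)\<^sup>2" M] expectation_eps_sq[of 0] by simp

lemma expectation_abs_eps_mult_le: "expectation (\<lambda>\<omega>. \<bar>\<epsilon> s \<omega> * \<epsilon> t \<omega>\<bar>) \<le> \<sigma>2"
proof -
  have "expectation (\<lambda>\<omega>. \<bar>\<epsilon> s \<omega> * \<epsilon> t \<omega>\<bar>) \<le> expectation (\<lambda>\<omega>. ((\<epsilon> s \<omega>)\<^sup>2 + (\<epsilon> t \<omega>)\<^sup>2) / 2)"
    by (intro integral_mono integrable_abs integrable_eps_mult integrable_divide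
        Bochner_Integration.integrable_add integrable_eps_sq abs_mult_le_half_sum_sq)
  also have "\<dots> = \<sigma>2"
    by (simp add: integrable_eps_sq expectation_eps_sq)
  finally show ?thesis .
qed

text \<open>The series \<open>\<Sum>j |c j \<epsilon>(t-j)|\<close>, computed in \<open>[0,\<infinity>]\<close>: it is square integrable, so it is
  finite almost surely, and then it dominates \<open>x t\<close> and all partial sums of its defining series.\<close>
definition abs_series :: "int \<Rightarrow> 'a \<Rightarrow> ennreal" where
  "abs_series t \<omega> = (\<Sum>j. ennreal (\<bar>c j\<bar> * \<bar>\<epsilon> (t - int j) \<omega>\<bar>))"

definition lin_proc_trunc :: "nat \<Rightarrow> int \<Rightarrow> 'a \<Rightarrow> real" where
  "lin_proc_trunc n t \<omega> = (\<Sum>j<n. c j * \<epsilon> (t - int j) \<omega>)"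

lemma abs_series_measurable [measurable]: "abs_series t \<in> borel_measurable M"
  unfolding abs_series_def by measurable

lemma lin_proc_trunc_measurable [measurable]: "lin_proc_trunc n t \<in> borel_measurable M"
  unfolding lin_proc_trunc_def by measurable

lemma lin_proc_measurable [measurable]: "lin_proc c \<epsilon> t \<in> borel_measurable M"
  unfolding lin_proc_def by measurable

lemma nn_integral_abs_eps_mult_le:
  "(\<integral>\<^sup>+\<omega>. ennreal (\<bar>c i\<bar> * \<bar>\<epsilon> a \<omega>\<bar>) * ennreal (\<bar>c j\<bar> * \<bar>\<epsilon> b \<omega>\<bar>) \<partial>M) \<le> ennreal (\<bar>c i\<bar> * \<bar>c j\<bar> * \<sigma>2)"
proof -
  have "(\<integral>\<^sup>+\<omega>. ennreal (\<bar>c i\<bar> * \<bar>\<epsilon> a \<omega>\<bar>) * ennreal (\<bar>c j\<bar> * \<bar>\<epsilon> b \<omega>\<bar>) \<partial>M)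
      = (\<integral>\<^sup>+\<omega>. ennreal (\<bar>c i\<bar> * \<bar>c j\<bar> * \<bar>\<epsilon> a \<omega> * \<epsilon> b \<omega>\<bar>) \<partial>M)"
    by (intro nn_integral_cong) (simp add: ennreal_mult[symmetric] abs_mult mult_ac)
  also have "\<dots> = ennreal (expectation (\<lambda>\<omega>. \<bar>c i\<bar> * \<bar>c j\<bar> * \<bar>\<epsilon> a \<omega> * \<epsilon> b \<omega>\<bar>))"
    by (intro nn_integral_eq_integral integrable_mult_right integrable_abs integrable_eps_mult) auto
  also have "\<dots> \<le> ennreal (\<bar>c i\<bar> * \<bar>c j\<bar> * \<sigma>2)"
    using expectation_abs_eps_mult_le[of a b] by (intro ennreal_leI) (auto intro!: mult_left_mono)
  finally show ?thesis .
qed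

lemma suminf_suminf_ennreal_abs_coef:
  "(\<Sum>i. \<Sum>j. ennreal (\<bar>c i\<bar> * \<bar>c j\<bar> * \<sigma>2)) = ennreal (\<sigma>2 * (\<Sum>j. \<bar>c j\<bar>)\<^sup>2)"
proof -
  define S where "S = (\<Sum>j. \<bar>c j\<bar>)"
  have "0 \<le> S"
    unfolding S_def by (intro suminf_nonneg summable_abs_coef) simp
  have inner: "(\<Sum>j. ennreal (\<bar>c i\<bar> * \<bar>c j\<bar> * \<sigma>2)) = ennreal (\<bar>c i\<bar> * (\<sigma>2 * S))" for i
  proof -
    have "(\<Sum>j. ennreal (\<bar>c i\<bar> * \<bar>c j\<bar> * \<sigma>2)) = (\<Sum>j. ennreal (\<bar>c i\<bar> * \<sigma>2 * \<bar>c j\<bar>))"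
      by (simp add: mult_ac)
    also have "\<dots> = ennreal (\<Sum>j. \<bar>c i\<bar> * \<sigma>2 * \<bar>c j\<bar>)"
      using sigma2_nonneg by (intro suminf_ennreal2 summable_mult summable_abs_coef) auto
    also have "\<dots> = ennreal (\<bar>c i\<bar> * (\<sigma>2 * S))"
      by (subst suminf_mult[OF summable_abs_coef]) (simp add: S_def mult_ac)
    finally show ?thesis .
  qed
  have "(\<Sum>i. \<Sum>j. ennreal (\<bar>c i\<bar> * \<bar>c j\<bar> * \<sigma>2)) = ennreal (\<Sum>i. \<bar>c i\<bar> * (\<sigma>2 * S))"
    unfolding inner using sigma2_nonneg \<open>0 \<le> S\<close>
    by (intro suminf_ennreal2 summable_mult2 summable_abs_coef) auto
  also have "(\<Sum>i. \<bar>c i\<bar> * (\<sigma>2 * S)) = S * (\<sigma>2 * S)"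
    by (simp add: S_def suminf_mult2[OF summable_abs_coef])
  finally show ?thesis
    by (simp add: S_def power2_eq_square mult_ac)
qed

lemma nn_integral_abs_series_mult:
  "(\<integral>\<^sup>+\<omega>. abs_series a \<omega> * abs_series b \<omega> \<partial>M) \<le> ennreal (\<sigma>2 * (\<Sum>j. \<bar>c j\<bar>)\<^sup>2)"
proof -
  have "(\<integral>\<^sup>+\<omega>. abs_series a \<omega> * abs_series b \<omega> \<partial>M)
      = (\<integral>\<^sup>+\<omega>. (\<Sum>i. \<Sum>j. ennreal (\<bar>c i\<bar> * \<bar>\<epsilon> (a - int i) \<omega>\<bar>) * ennreal (\<bar>c j\<bar> * \<bar>\<epsilon> (b - int j) \<omega>\<bar>)) \<partial>M)"
    unfolding abs_series_def by (simp only: ennreal_suminf_multc ennreal_suminf_cmult)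
  also have "\<dots> = (\<Sum>i. \<integral>\<^sup>+\<omega>. (\<Sum>j. ennreal (\<bar>c i\<bar> * \<bar>\<epsilon> (a - int i) \<omega>\<bar>) * ennreal (\<bar>c j\<bar> * \<bar>\<epsilon> (b - int j) \<omega>\<bar>)) \<partial>M)"
    by (rule nn_integral_suminf) measurable
  also have "\<dots> = (\<Sum>i. \<Sum>j. \<integral>\<^sup>+\<omega>. ennreal (\<bar>c i\<bar> * \<bar>\<epsilon> (a - int i) \<omega>\<bar>) * ennreal (\<bar>c j\<bar> * \<bar>\<epsilon> (b - int j) \<omega>\<bar>) \<partial>M)"
    by (intro arg_cong[where f = suminf] ext nn_integral_suminf) measurable
  also have "\<dots> \<le> (\<Sum>i. \<Sum>j. ennreal (\<bar>c i\<bar> * \<bar>c j\<bar> * \<sigma>2))"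
    by (intro suminf_le summableI allI nn_integral_abs_eps_mult_le)
  finally show ?thesis
    unfolding suminf_suminf_ennreal_abs_coef .
qed

lemma integrable_abs_series_mult:
  "integrable M (\<lambda>\<omega>. enn2real (abs_series a \<omega>) * enn2real (abs_series b \<omega>))"
  unfolding integrable_iff_bounded
proof
  show "(\<lambda>\<omega>. enn2real (abs_series a \<omega>) * enn2real (abs_series b \<omega>)) \<in> borel_measurable M"
    by measurable
  have "(\<integral>\<^sup>+\<omega>. ennreal (norm (enn2real (abs_series a \<omega>) * enn2real (abs_series b \<omega>))) \<partial>M)
      \<le> (\<integral>\<^sup>+\<omega>. abs_series a \<omega> * abs_series b \<omega> \<partial>M)"
  proof (intro nn_integral_mono)
    fix \<omega>
    have "ennreal (norm (enn2real (abs_series a \<omega>) * enn2real (abs_series b \<omega>)))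
        = ennreal (enn2real (abs_series a \<omega>)) * ennreal (enn2real (abs_series b \<omega>))"
      by (simp add: ennreal_mult abs_mult)
    also have "\<dots> \<le> abs_series a \<omega> * abs_series b \<omega>"
      by (intro mult_mono) (auto simp: ennreal_enn2real_if)
    finally show "ennreal (norm (enn2real (abs_series a \<omega>) * enn2real (abs_series b \<omega>)))
        \<le> abs_series a \<omega> * abs_series b \<omega>" .
  qed
  also have "\<dots> < \<infinity>"
    using nn_integral_abs_series_mult[of a b] by (rule le_less_trans) simp
  finally show "(\<integral>\<^sup>+\<omega>. ennreal (norm (enn2real (abs_series a \<omega>) * enn2real (abs_series b \<omega>))) \<partial>M) < \<infinity>" .
qed

lemma integrable_abs_series: "integrable M (\<lambda>\<omega>. enn2real (abs_series t \<omega>))"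
proof (rule square_integrable_imp_integrable)
  show "integrable M (\<lambda>\<omega>. (enn2real (abs_series t \<omega>))\<^sup>2)"
    using integrable_abs_series_mult[of t t] by (simp add: power2_eq_square)
qed measurable

lemma AE_abs_series_finite: "AE \<omega> in M. \<forall>t. abs_series t \<omega> \<noteq> \<top>"
  unfolding AE_all_countable
proof
  fix t
  have "AE \<omega> in M. abs_series t \<omega> * abs_series t \<omega> \<noteq> \<infinity>"
    using le_less_trans[OF nn_integral_abs_series_mult[of t t] ennreal_less_top]
    by (intro nn_integral_PInf_AE) auto
  then show "AE \<omega> in M. abs_series t \<omega> \<noteq> \<top>"
    by eventually_elim (auto simp: ennreal_mult_eq_top_iff)
qed

lemma finite_abs_series_dominates:
  assumes "abs_series t \<omega> \<noteq> \<top>"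
  shows "(\<lambda>n. lin_proc_trunc n t \<omega>) \<longlonglongrightarrow> lin_proc c \<epsilon> t \<omega>"
    and "\<bar>lin_proc_trunc n t \<omega>\<bar> \<le> enn2real (abs_series t \<omega>)"
    and "\<bar>lin_proc c \<epsilon> t \<omega>\<bar> \<le> enn2real (abs_series t \<omega>)"
proof -
  have summable: "summable (\<lambda>j. \<bar>c j * \<epsilon> (t - int j) \<omega>\<bar>)"
    by (rule summable_suminf_not_top) (use assms in \<open>auto simp: abs_series_def abs_mult\<close>)
  have abs_series_eq: "enn2real (abs_series t \<omega>) = (\<Sum>j. \<bar>c j * \<epsilon> (t - int j) \<omega>\<bar>)"
    unfolding abs_series_def using summable
    by (subst suminf_ennreal2) (auto simp: abs_mult suminf_nonneg)
  show "(\<lambda>n. lin_proc_trunc n t \<omega>) \<longlonglongrightarrow> lin_proc c \<epsilon> t \<omega>"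
    unfolding lin_proc_trunc_def lin_proc_def by (rule summable_LIMSEQ[OF summable_rabs_cancel[OF summable]])
  have "\<bar>lin_proc_trunc n t \<omega>\<bar> \<le> (\<Sum>j<n. \<bar>c j * \<epsilon> (t - int j) \<omega>\<bar>)"
    unfolding lin_proc_trunc_def by (rule sum_abs)
  also have "\<dots> \<le> (\<Sum>j. \<bar>c j * \<epsilon> (t - int j) \<omega>\<bar>)"
    by (intro sum_le_suminf summable) auto
  finally show "\<bar>lin_proc_trunc n t \<omega>\<bar> \<le> enn2real (abs_series t \<omega>)"
    unfolding abs_series_eq .
  show "\<bar>lin_proc c \<epsilon> t \<omega>\<bar> \<le> enn2real (abs_series t \<omega>)"
    unfolding abs_series_eq lin_proc_def by (rule summable_rabs[OF summable])
qed

lemma integrable_lin_proc_mult: "integrable M (\<lambda>\<omega>. lin_proc c \<epsilon> a \<omega> * lin_proc c \<epsilon> b \<omega>)"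
proof (rule Bochner_Integration.integrable_bound[OF integrable_abs_series_mult[of a b]])
  show "AE \<omega> in M. norm (lin_proc c \<epsilon> a \<omega> * lin_proc c \<epsilon> b \<omega>)
      \<le> norm (enn2real (abs_series a \<omega>) * enn2real (abs_series b \<omega>))"
    using AE_abs_series_finite
  proof eventually_elim
    case (elim \<omega>)
    then have "\<bar>lin_proc c \<epsilon> a \<omega>\<bar> * \<bar>lin_proc c \<epsilon> b \<omega>\<bar> \<le> enn2real (abs_series a \<omega>) * enn2real (abs_series b \<omega>)"
      by (intro mult_mono finite_abs_series_dominates) auto
    then show ?case
      by (simp add: abs_mult)
  qed
qed simp

lemma integrable_lin_proc: "integrable M (lin_proc c \<epsilon> t)"
proof (rule square_integrable_imp_integrable)
  show "integrable M (\<lambda>\<omega>. (lin_proc c \<epsilon> t \<omega>)\<^sup>2)"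
    using integrable_lin_proc_mult[of t t] by (simp add: power2_eq_square)
qed measurable

lemma expectation_lin_proc: "expectation (lin_proc c \<epsilon> t) = 0"
proof -
  have "(\<lambda>n. expectation (lin_proc_trunc n t)) \<longlonglongrightarrow> expectation (lin_proc c \<epsilon> t)"
  proof (rule integral_dominated_convergence[OF _ _ integrable_abs_series[of t]])
    show "AE \<omega> in M. (\<lambda>n. lin_proc_trunc n t \<omega>) \<longlonglongrightarrow> lin_proc c \<epsilon> t \<omega>"
      using AE_abs_series_finite by eventually_elim (intro finite_abs_series_dominates, simp)
    show "AE \<omega> in M. norm (lin_proc_trunc n t \<omega>) \<le> enn2real (abs_series t \<omega>)" for n
      using AE_abs_series_finite by eventually_elim (simp add: finite_abs_series_dominates)
  qed auto
  moreover have "expectation (lin_proc_trunc n t) = 0" for n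
    unfolding lin_proc_trunc_def by (simp add: integrable_eps expectation_eps)
  ultimately show ?thesis
    using LIMSEQ_unique[OF tendsto_const[of 0]] by simp
qed

lemma expectation_lin_proc_trunc_mult:
  assumes "a \<le> b"
  shows "expectation (\<lambda>\<omega>. lin_proc_trunc n a \<omega> * lin_proc_trunc n b \<omega>) = \<sigma>2 * lag_prod_sum c n (nat (b - a))"
proof -
  define h where "h = nat (b - a)"
  have "expectation (\<lambda>\<omega>. lin_proc_trunc n a \<omega> * lin_proc_trunc n b \<omega>)
      = expectation (\<lambda>\<omega>. \<Sum>i<n. \<Sum>j<n. (c i * c j) * (\<epsilon> (a - int i) \<omega> * \<epsilon> (b - int j) \<omega>))"
    unfolding lin_proc_trunc_def by (simp add: sum_product mult_ac)
  also have "\<dots> = (\<Sum>i<n. \<Sum>j<n. (c i * c j) * expectation (\<lambda>\<omega>. \<epsilon> (a - int i) \<omega> * \<epsilon> (b - int j) \<omega>))"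
    by (simp add: Bochner_Integration.integral_sum Bochner_Integration.integrable_sum integrable_eps_mult)
  also have "\<dots> = (\<Sum>i<n. \<Sum>j<n. if j = i + h then \<sigma>2 * (c i * c j) else 0)"
  proof (intro sum.cong refl)
    fix i j
    have "(a - int i = b - int j) = (j = i + h)"
      using assms unfolding h_def by auto
    then show "(c i * c j) * expectation (\<lambda>\<omega>. \<epsilon> (a - int i) \<omega> * \<epsilon> (b - int j) \<omega>)
        = (if j = i + h then \<sigma>2 * (c i * c j) else 0)"
      by (simp add: expectation_eps_mult)
  qed
  also have "\<dots> = (\<Sum>i \<in> {..<n} \<inter> {i. i + h < n}. \<sigma>2 * (c i * c (i + h)))"
    by (simp add: sum.delta' sum.If_cases)
  also have "{..<n} \<inter> {i. i + h < n} = {..<n - h}"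
    by auto
  finally show ?thesis
    unfolding h_def lag_prod_sum_def by (simp add: sum_distrib_left)
qed

lemma expectation_lin_proc_mult_le:
  assumes "a \<le> b"
  shows "expectation (\<lambda>\<omega>. lin_proc c \<epsilon> a \<omega> * lin_proc c \<epsilon> b \<omega>) = \<sigma>2 * coef_autocov c (nat (b - a))"
proof -
  have "(\<lambda>n. expectation (\<lambda>\<omega>. lin_proc_trunc n a \<omega> * lin_proc_trunc n b \<omega>))
      \<longlonglongrightarrow> expectation (\<lambda>\<omega>. lin_proc c \<epsilon> a \<omega> * lin_proc c \<epsilon> b \<omega>)"
  proof (rule integral_dominated_convergence[OF _ _ integrable_abs_series_mult[of a b]])
    show "AE \<omega> in M. (\<lambda>n. lin_proc_trunc n a \<omega> * lin_proc_trunc n b \<omega>) \<longlonglongrightarrow> lin_proc c \<epsilon> a \<omega> * lin_proc c \<epsilon> b \<omega>"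
      using AE_abs_series_finite by eventually_elim (auto intro!: tendsto_mult finite_abs_series_dominates)
    show "AE \<omega> in M. norm (lin_proc_trunc n a \<omega> * lin_proc_trunc n b \<omega>)
        \<le> enn2real (abs_series a \<omega>) * enn2real (abs_series b \<omega>)" for n
      using AE_abs_series_finite
    proof eventually_elim
      case (elim \<omega>)
      then have "\<bar>lin_proc_trunc n a \<omega>\<bar> * \<bar>lin_proc_trunc n b \<omega>\<bar> \<le> enn2real (abs_series a \<omega>) * enn2real (abs_series b \<omega>)"
        by (intro mult_mono finite_abs_series_dominates) auto
      then show ?case
        by (simp add: abs_mult)
    qed
  qed auto
  moreover have "(\<lambda>n. expectation (\<lambda>\<omega>. lin_proc_trunc n a \<omega> * lin_proc_trunc n b \<omega>))
      \<longlonglongrightarrow> \<sigma>2 * coef_autocov c (nat (b - a))"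
    unfolding expectation_lin_proc_trunc_mult[OF assms]
    by (intro tendsto_mult tendsto_const lag_prod_sum_tendsto_coef_autocov summable_abs_coef)
  ultimately show ?thesis
    using LIMSEQ_unique by blast
qed

lemma expectation_lin_proc_mult:
  "expectation (\<lambda>\<omega>. lin_proc c \<epsilon> (int s) \<omega> * lin_proc c \<epsilon> (int t) \<omega>)
    = \<sigma>2 * coef_autocov c (if s \<le> t then t - s else s - t)"
proof (cases "s \<le> t")
  case True
  then show ?thesis
    using expectation_lin_proc_mult_le[of "int s" "int t"] by (simp add: nat_diff_distrib)
next
  case False
  then show ?thesis
    using expectation_lin_proc_mult_le[of "int t" "int s"] by (simp add: nat_diff_distrib mult.commute)
qed

lemma Var_weighted_sum:
  "Var M (\<lambda>\<omega>. \<Sum>t = 1..T. w t * lin_proc c \<epsilon> (int t) \<omega>)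
    = (\<Sum>s<T. \<Sum>t<T. w (Suc s) * w (Suc t) * (\<sigma>2 * coef_autocov c (if s \<le> t then t - s else s - t)))"
proof -
  define X where "X \<omega> = (\<Sum>s<T. w (Suc s) * lin_proc c \<epsilon> (int (Suc s)) \<omega>)" for \<omega>
  have X_eq: "(\<lambda>\<omega>. \<Sum>t = 1..T. w t * lin_proc c \<epsilon> (int t) \<omega>) = X"
    unfolding X_def by (intro ext) (simp add: sum.atLeast1_atMost_eq)
  have "expectation X = 0"
    unfolding X_def by (simp add: Bochner_Integration.integral_sum integrable_lin_proc expectation_lin_proc)
  moreover have "(\<lambda>\<omega>. (X \<omega>)\<^sup>2) = (\<lambda>\<omega>. \<Sum>s<T. \<Sum>t<T. (w (Suc s) * w (Suc t)) *
      (lin_proc c \<epsilon> (int (Suc s)) \<omega> * lin_proc c \<epsilon> (int (Suc t)) \<omega>))"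
    unfolding X_def by (simp add: power2_eq_square sum_product mult_ac)
  ultimately have "Var M X = (\<Sum>s<T. \<Sum>t<T. (w (Suc s) * w (Suc t)) *
      expectation (\<lambda>\<omega>. lin_proc c \<epsilon> (int (Suc s)) \<omega> * lin_proc c \<epsilon> (int (Suc t)) \<omega>))"
    unfolding Var_def
    by (simp add: Bochner_Integration.integral_sum Bochner_Integration.integrable_sum integrable_lin_proc_mult)
  also have "\<dots> = (\<Sum>s<T. \<Sum>t<T. w (Suc s) * w (Suc t) * (\<sigma>2 * coef_autocov c (if s \<le> t then t - s else s - t)))"
    by (simp only: expectation_lin_proc_mult diff_Suc_Suc Suc_le_mono)
  finally show ?thesis
    unfolding X_eq .
qed

end

theorem mainTheorem3:
  fixes M :: "'a measure" and \<epsilon> :: "int \<Rightarrow> 'a \<Rightarrow> real"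
    and c :: "nat \<Rightarrow> real" and \<sigma>2 d :: real
  assumes "prob_space M"
    and eps_meas: "\<And>t. \<epsilon> t \<in> borel_measurable M"
    and eps_L2: "\<And>t. integrable M (\<lambda>\<omega>. (\<epsilon> t \<omega>)\<^sup>2)"
    and eps_mean: "\<And>t. expect M (\<epsilon> t) = 0"
    and eps_var: "\<And>t. expect M (\<lambda>\<omega>. (\<epsilon> t \<omega>)\<^sup>2) = \<sigma>2"
    and sigma_pos: "\<sigma>2 > 0"
    and eps_uncorr: "\<And>s t. s \<noteq> t \<Longrightarrow> expect M (\<lambda>\<omega>. \<epsilon> s \<omega> * \<epsilon> t \<omega>) = 0"
    and c0: "c 0 = 1"
    and c_abs: "summable (\<lambda>j. \<bar>c j\<bar>)"
    and c1: "suminf c \<noteq> 0"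
    and d: "0 < d" "d < 1/2"
  shows "summable (\<lambda>h. autocov M (lin_proc c \<epsilon>) (int (Suc h)))
    \<and> ((\<lambda>T. Var M (\<lambda>\<omega>. \<Sum>t = 1..T. partial_coef d t * lin_proc c \<epsilon> (int t) \<omega>)
              / (\<Sum>t = 1..T. (partial_coef d t)\<^sup>2))
        \<longlongrightarrow> autocov M (lin_proc c \<epsilon>) 0
              + 2 * (\<Sum>h. autocov M (lin_proc c \<epsilon>) (int (Suc h)))) at_top
    \<and> autocov M (lin_proc c \<epsilon>) 0 + 2 * (\<Sum>h. autocov M (lin_proc c \<epsilon>) (int (Suc h)))
        = \<sigma>2 * (suminf c)\<^sup>2"
proof -
  interpret linear_process M \<epsilon> \<sigma>2 c
    using assms unfolding linear_process_def linear_process_axioms_def expect_def by auto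
  define G where "G h = \<sigma>2 * coef_autocov c h" for h
  have autocov_eq: "autocov M (lin_proc c \<epsilon>) (int h) = G h" for h
    using expectation_lin_proc_mult[of 0 h] by (simp add: autocov_def expect_def G_def)
  have autocov_0: "autocov M (lin_proc c \<epsilon>) 0 = G 0"
    using autocov_eq[of 0] by simp
  have autocov_Suc: "(\<lambda>h. autocov M (lin_proc c \<epsilon>) (int (Suc h))) = (\<lambda>h. G (Suc h))"
    using autocov_eq by (intro ext)
  have coef_autocov_summable: "summable (\<lambda>h. \<bar>coef_autocov c (Suc h)\<bar>)"
    using summable_coef_autocov[OF c_abs] summable_Suc_iff[of "\<lambda>h. \<bar>coef_autocov c h\<bar>"] by simp
  have G_summable: "summable (\<lambda>h. \<bar>G (Suc h)\<bar>)"
    using summable_mult[OF coef_autocov_summable, of "\<bar>\<sigma>2\<bar>"] by (simp add: G_def abs_mult)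
  have "(\<lambda>T. Var M (\<lambda>\<omega>. \<Sum>t = 1..T. partial_coef d t * lin_proc c \<epsilon> (int t) \<omega>)
      / (\<Sum>t = 1..T. (partial_coef d t)\<^sup>2)) \<longlonglongrightarrow> G 0 + 2 * (\<Sum>h. G (Suc h))"
    unfolding Var_weighted_sum
    using toeplitz_form_ratio_tendsto[OF decseq_partial_coef _ _ G_summable, of d] d
      sum_partial_coef_sq_at_top[OF d] partial_coef_pos[of d]
    by (simp add: G_def sum.atLeast1_atMost_eq less_imp_le)
  moreover have "G 0 + 2 * (\<Sum>h. G (Suc h)) = \<sigma>2 * (coef_autocov c 0 + 2 * (\<Sum>h. coef_autocov c (Suc h)))"
    using suminf_mult[OF summable_rabs_cancel[OF coef_autocov_summable], of \<sigma>2]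
    by (simp add: G_def algebra_simps)
  ultimately show ?thesis
    unfolding autocov_0 autocov_Suc coef_autocov_sum_eq_sq_suminf[OF c_abs]
    using summable_rabs_cancel[OF G_summable] by simp
qed

end
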